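(* Let $J\subset S$ be a saturated Borel ideal with Hilbert polynomial $p(z)=p_{S/J}(z)$ and Gotzmann number $r$. Let $I=J_{x_0x_1}$ be the $x_1$-saturation of $J$ and let $q:=\dim_K I_r-\dim_K J_r$. Then (i) $p_{S/I}(z)=p(z)-q$; (ii) $q$ equals the sum, over all minimal monomial generators of $J$, of the exponent of $x_1$ in that generator.
   Context: $S=K[x_0,\dots,x_n]$, $K$ algebraically closed of characteristic $0$, standard grading, $x_0<x_1<\dots<x_n$. A monomial ideal is Borel if $x^\alpha\in J$, $\alpha_j>0$, $j<n$ imply $x^\alpha x_{j+1}/x_j\in J$. For a Borel ideal $J$, its $x_1$-saturation $J_{x_0x_1}$ is the (Borel) ideal of $S$ generated by the terms obtained by setting $x_0=x_1=1$ in the minimal monomial generators of $J$ (its saturation $J^{sat}$ is obtained by setting $x_0=1$). Gotzmann number: every admissible (Hilbert) polynomial is uniquely $p(z)=\sum_{i=1}^r\binom{z+a_i-(i-1)}{a_i}$ with $a_1\ge\dots\ge a_r\ge 0$, and $r$ is its Gotzmann number. *)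

theory Defs
  imports Complex_Main "HOL-Computational_Algebra.Polynomial"
begin

text \<open>Monomials of S = K[x_0,...,x_n] are exponent vectors a :: nat => nat with a i = 0 for i > n.
A monomial ideal is represented by the set of monomials it contains (which is a K-basis of it).\<close>

definition mons :: "nat \<Rightarrow> (nat \<Rightarrow> nat) set" where
  "mons n = {a. \<forall>i>n. a i = 0}"

definition mdeg :: "nat \<Rightarrow> (nat \<Rightarrow> nat) \<Rightarrow> nat" where
  "mdeg n a = (\<Sum>i\<le>n. a i)"

definition mon_ideal :: "nat \<Rightarrow> (nat \<Rightarrow> nat) set \<Rightarrow> bool" where
  "mon_ideal n J \<longleftrightarrow> J \<subseteq> mons n \<and> (\<forall>a\<in>J. \<forall>b\<in>mons n. (\<lambda>i. a i + b i) \<in> J)"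

definition gen_ideal :: "nat \<Rightarrow> (nat \<Rightarrow> nat) set \<Rightarrow> (nat \<Rightarrow> nat) set" where
  "gen_ideal n G = {b \<in> mons n. \<exists>g\<in>G. g \<le> b}"

definition min_gens :: "(nat \<Rightarrow> nat) set \<Rightarrow> (nat \<Rightarrow> nat) set" where
  "min_gens J = {a \<in> J. \<forall>b\<in>J. b \<le> a \<longrightarrow> b = a}"

definition borel :: "nat \<Rightarrow> (nat \<Rightarrow> nat) set \<Rightarrow> bool" where
  "borel n J \<longleftrightarrow> mon_ideal n J \<and>
     (\<forall>a\<in>J. \<forall>j<n. a j > 0 \<longrightarrow> a(j := a j - 1, Suc j := a (Suc j) + 1) \<in> J)"

text \<open>saturation: set x_0 = 1 in the minimal generators\<close>
definition sat :: "nat \<Rightarrow> (nat \<Rightarrow> nat) set \<Rightarrow> (nat \<Rightarrow> nat) set" where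
  "sat n J = gen_ideal n ((\<lambda>a. a(0 := 0)) ` min_gens J)"

text \<open>x_1-saturation J_{x_0 x_1}: set x_0 = x_1 = 1 in the minimal generators\<close>
definition sat01 :: "nat \<Rightarrow> (nat \<Rightarrow> nat) set \<Rightarrow> (nat \<Rightarrow> nat) set" where
  "sat01 n J = gen_ideal n ((\<lambda>a. a(0 := 0, 1 := 0)) ` min_gens J)"

definition dim_deg :: "nat \<Rightarrow> (nat \<Rightarrow> nat) set \<Rightarrow> nat \<Rightarrow> nat" where
  "dim_deg n J z = card {a \<in> J. mdeg n a = z}"

definition hilb_fun :: "nat \<Rightarrow> (nat \<Rightarrow> nat) set \<Rightarrow> nat \<Rightarrow> nat" where
  "hilb_fun n J z = card {a \<in> mons n - J. mdeg n a = z}"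

definition is_hilb_poly :: "nat \<Rightarrow> (nat \<Rightarrow> nat) set \<Rightarrow> real poly \<Rightarrow> bool" where
  "is_hilb_poly n J p \<longleftrightarrow> (\<forall>\<^sub>F z in sequentially. real (hilb_fun n J z) = poly p (real z))"

text \<open>r is the Gotzmann number of p: p(z) = sum_{i=1}^r binom(z + a_i - (i-1), a_i),
  a_1 >= ... >= a_r >= 0 (identity of polynomials, equivalently for all large z)\<close>
definition gotzmann_number :: "real poly \<Rightarrow> nat \<Rightarrow> bool" where
  "gotzmann_number p r \<longleftrightarrow> (\<exists>a :: nat \<Rightarrow> nat.
     (\<forall>i j. 1 \<le> i \<longrightarrow> i \<le> j \<longrightarrow> j \<le> r \<longrightarrow> a j \<le> a i) \<and>
     (\<forall>\<^sub>F z in sequentially. poly p (real z) =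
        (\<Sum>i=1..r. real ((z + a i - (i - 1)) choose (a i)))))"

end

theory Submission
  imports Defs "HOL-Library.FuncSet"
begin

(* Let J be a saturated Borel ideal in S = K[x_0,...,x_n], n = m + 1, and I = J_{x_0 x_1} its
   x_1-saturation; I consists of the monomials b such that b * x_1^k lies in J for some k.
   The monomials of I - J not divisible by x_0 form the "gap set" F.  Since I and J are both
   x_0-saturated, the degree-d part of I - J corresponds bijectively to the elements of F of
   degree at most d, so  H_{S/J}(d) = H_{S/I}(d) + #{f in F. deg f <= d}.

   Two facts about F give the theorem:
   (1) all elements of F have degree < r, the Gotzmann number of p = p_{S/J}; hence
       H_{S/I}(d) = H_{S/J}(d) - #F for d >= r, which is (i) with q = #F;
   (2) F is in bijection with the pairs (g, j), g a minimal generator of J, 1 <= j <= g_1,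
       via (g, j) |-> g / x_1^j; so #F is the sum of the x_1-exponents of the generators, (ii).  The induction step passes
   from J to the x_0-section of I (the ideal in one variable fewer obtained by dropping x_0),
   whose Hilbert function is the first difference of H_{S/I}.  Uniqueness of Gotzmann
   representations then identifies the r of the construction with the Gotzmann number of p. *)

text \<open>Exponent vectors are ordered componentwise; \<open>a \<le> b\<close> means that \<open>x^a\<close> divides \<open>x^b\<close>.\<close>

lemma mons_downward:
  assumes "b \<in> mons n" "a \<le> b"
  shows "a \<in> mons n"
  unfolding mons_def
proof (intro CollectI allI impI)
  fix i assume "n < i"
  then have "b i = 0" using assms(1) unfolding mons_def by simp
  moreover have "a i \<le> b i" using assms(2) by (simp add: le_fun_def)
  ultimately show "a i = 0" by simp
qed

lemma mons_upd: "b \<in> mons n \<Longrightarrow> j \<le> n \<Longrightarrow> b(j := x) \<in> mons n"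
  unfolding mons_def by auto

lemma mdeg_strict_mono:
  assumes b: "b \<in> mons n" and le: "a \<le> b" and ne: "a \<noteq> b"
  shows "mdeg n a < mdeg n b"
proof -
  obtain i where i: "a i \<noteq> b i" using ne by (auto simp: fun_eq_iff)
  have "i \<le> n"
  proof (rule ccontr)
    assume "\<not> i \<le> n"
    then have "a i = 0" "b i = 0" using b mons_downward[OF b le] unfolding mons_def by auto
    then show False using i by simp
  qed
  moreover have "a i < b i" using le i unfolding le_fun_def by (simp add: le_neq_implies_less)
  ultimately show ?thesis unfolding mdeg_def using le unfolding le_fun_def
    by (intro sum_strict_mono_ex1) auto
qed

lemma mdeg_coord_le: "i \<le> n \<Longrightarrow> a i \<le> mdeg n a"
  unfolding mdeg_def by (intro member_le_sum) auto

lemma mdeg_upd: "j \<le> n \<Longrightarrow> mdeg n (a(j := x)) + a j = mdeg n a + x"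
proof -
  assume j: "j \<le> n"
  have rest: "(\<Sum>i\<in>{..n} - {j}. (a(j := x)) i) = (\<Sum>i\<in>{..n} - {j}. a i)"
    by (rule sum.cong) auto
  have "mdeg n (a(j := x)) = x + (\<Sum>i\<in>{..n} - {j}. (a(j := x)) i)"
    unfolding mdeg_def using j by (subst sum.remove[of _ j]) auto
  moreover have "mdeg n a = a j + (\<Sum>i\<in>{..n} - {j}. a i)"
    unfolding mdeg_def using j by (subst sum.remove[of _ j]) auto
  ultimately show ?thesis using rest by simp
qed

lemma finite_mons_deg: "finite {a \<in> mons n. mdeg n a \<le> B}"
proof -
  let ?S = "{a \<in> mons n. mdeg n a \<le> B}"
  have "inj_on (\<lambda>a. restrict a {..n}) (mons n)"
  proof (rule inj_onI)
    fix a b assume a: "a \<in> mons n" and b: "b \<in> mons n" and e: "restrict a {..n} = restrict b {..n}"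
    show "a = b"
    proof
      fix i show "a i = b i"
        using a b fun_cong[OF e, of i] unfolding mons_def by (cases "i \<le> n") auto
    qed
  qed
  then have "inj_on (\<lambda>a. restrict a {..n}) ?S" by (rule inj_on_subset) auto
  moreover have "(\<lambda>a. restrict a {..n}) ` ?S \<subseteq> Pi\<^sub>E {..n} (\<lambda>_. {..B})"
  proof (intro image_subsetI)
    fix a assume "a \<in> ?S"
    then have "\<forall>i\<in>{..n}. a i \<in> {..B}" using mdeg_coord_le[of _ n a] by fastforce
    then show "restrict a {..n} \<in> Pi\<^sub>E {..n} (\<lambda>_. {..B})" by (simp add: restrict_PiE_iff)
  qed
  then have "finite ((\<lambda>a. restrict a {..n}) ` ?S)"
    by (rule finite_subset) (simp add: finite_PiE)
  ultimately show ?thesis using finite_imageD by blast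
qed

lemma finite_mons_deg_eq: "X \<subseteq> mons n \<Longrightarrow> finite {a \<in> X. mdeg n a = d}"
  by (rule finite_subset[OF _ finite_mons_deg[of n d]]) auto

lemma intermediate_mon:
  assumes f: "f \<in> mons n" and wf: "w \<le> f" and e: "mdeg n w \<le> e" "e \<le> mdeg n f"
  shows "\<exists>v. w \<le> v \<and> v \<le> f \<and> mdeg n v = e"
proof -
  have "\<exists>v. w \<le> v \<and> v \<le> f \<and> mdeg n v = mdeg n w + k" if "mdeg n w + k \<le> mdeg n f" for k
    using that
  proof (induction k)
    case 0 then show ?case using wf by auto
  next
    case (Suc k)
    then obtain v where v: "w \<le> v" "v \<le> f" "mdeg n v = mdeg n w + k" by auto
    then have "v \<noteq> f" using Suc.prems by auto
    then obtain i where "v i \<noteq> f i" by (auto simp: fun_eq_iff)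
    moreover have "v i \<le> f i" using v(2) unfolding le_fun_def by blast
    ultimately have lt: "v i < f i" by simp
    have "i \<le> n"
    proof (rule ccontr)
      assume "\<not> i \<le> n"
      then have "f i = 0" using f unfolding mons_def by simp
      then show False using lt by simp
    qed
    note i = lt this
    let ?v = "v(i := v i + 1)"
    have "w \<le> ?v" "?v \<le> f" using v(1,2) i(1) unfolding le_fun_def by (auto simp: le_SucI)
    moreover have "mdeg n ?v = mdeg n w + Suc k" using mdeg_upd[OF i(2), of v "v i + 1"] v(3) by simp
    ultimately show ?case by blast
  qed
  from this[of "e - mdeg n w"] e show ?thesis by auto
qed

lemma card_ge_degree_range:
  assumes fin: "finite S" and ex: "\<And>e. lo \<le> e \<Longrightarrow> e \<le> hi \<Longrightarrow> \<exists>v\<in>S. deg v = e"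
  shows "hi + 1 - lo \<le> card S"
proof -
  have "{lo..hi} \<subseteq> deg ` S" using ex by force
  then have "card {lo..hi} \<le> card (deg ` S)" using fin by (intro card_mono) auto
  also have "\<dots> \<le> card S" using fin by (rule card_image_le)
  finally show ?thesis by simp
qed

lemma mon_ideal_sub: "mon_ideal n J \<Longrightarrow> J \<subseteq> mons n"
  unfolding mon_ideal_def by simp

lemma mon_ideal_upward:
  assumes J: "mon_ideal n J" and a: "a \<in> J" and le: "a \<le> c" and c: "c \<in> mons n"
  shows "c \<in> J"
proof -
  have "(\<lambda>i. c i - a i) \<in> mons n" using c unfolding mons_def by auto
  moreover have "\<forall>a\<in>J. \<forall>b\<in>mons n. (\<lambda>i. a i + b i) \<in> J" using J unfolding mon_ideal_def by simp
  ultimately have "(\<lambda>i. a i + (c i - a i)) \<in> J" using a by simp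
  moreover have "(\<lambda>i. a i + (c i - a i)) = c" using le unfolding le_fun_def by (auto simp: fun_eq_iff)
  ultimately show ?thesis by simp
qed

text \<open>Every element of a monomial ideal is divisible by a minimal generator
  (take a divisor in the ideal of least degree).\<close>
lemma exists_min_gen:
  assumes J: "mon_ideal n J" and b: "b \<in> J"
  shows "\<exists>g\<in>min_gens J. g \<le> b"
proof -
  let ?P = "\<lambda>g. g \<in> J \<and> g \<le> b"
  define g where "g = arg_min (mdeg n) ?P"
  have gP: "?P g" and gmin: "\<And>h. ?P h \<Longrightarrow> mdeg n g \<le> mdeg n h"
    using arg_min_nat_lemma[of ?P b "mdeg n"] b unfolding g_def by auto
  have gm: "g \<in> mons n" using gP J mon_ideal_sub by blast
  have "g \<in> min_gens J"
    unfolding min_gens_def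
  proof (intro CollectI conjI ballI impI)
    fix h assume h: "h \<in> J" "h \<le> g"
    then have "?P h" using gP order.trans by blast
    then have "mdeg n g \<le> mdeg n h" by (rule gmin)
    then show "h = g" using mdeg_strict_mono[OF gm h(2)] by linarith
  qed (use gP in simp)
  then show ?thesis using gP by blast
qed

lemma finite_min_gens:
  assumes J: "J \<subseteq> mons n" and bound: "\<forall>b\<in>J. \<exists>g\<in>J. g \<le> b \<and> mdeg n g \<le> B"
  shows "finite (min_gens J)"
proof (rule finite_subset[OF _ finite_mons_deg[of n B]])
  show "min_gens J \<subseteq> {a \<in> mons n. mdeg n a \<le> B}"
  proof
    fix g assume g: "g \<in> min_gens J"
    then obtain h where h: "h \<in> J" "h \<le> g" "mdeg n h \<le> B" using bound unfolding min_gens_def by blast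
    then have "h = g" using g unfolding min_gens_def by blast
    then show "g \<in> {a \<in> mons n. mdeg n a \<le> B}" using h J by auto
  qed
qed

lemma hilb_fun_nested:
  assumes "J \<subseteq> I" "I \<subseteq> mons n"
  shows "hilb_fun n J d = hilb_fun n I d + card {b \<in> I - J. mdeg n b = d}"
proof -
  have "{a \<in> mons n - J. mdeg n a = d} =
     {a \<in> mons n - I. mdeg n a = d} \<union> {b \<in> I - J. mdeg n b = d}"
    using assms by auto
  moreover have "finite {a \<in> mons n - I. mdeg n a = d}" by (rule finite_mons_deg_eq) blast
  moreover have "finite {b \<in> I - J. mdeg n b = d}" by (rule finite_mons_deg_eq) (use assms in blast)
  ultimately show ?thesis unfolding hilb_fun_def by (simp add: card_Un_disjoint disjoint_iff)
qed

lemma dim_deg_nested: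
  assumes "J \<subseteq> I" "I \<subseteq> mons n"
  shows "dim_deg n I d = dim_deg n J d + card {b \<in> I - J. mdeg n b = d}"
proof -
  have "{a \<in> I. mdeg n a = d} = {a \<in> J. mdeg n a = d} \<union> {b \<in> I - J. mdeg n b = d}"
    using assms by auto
  moreover have "finite {a \<in> J. mdeg n a = d}" by (rule finite_mons_deg_eq) (use assms in blast)
  moreover have "finite {b \<in> I - J. mdeg n b = d}" by (rule finite_mons_deg_eq) (use assms in blast)
  ultimately show ?thesis unfolding dim_deg_def by (simp add: card_Un_disjoint disjoint_iff)
qed

section \<open>Saturated Borel ideals\<close>

text \<open>A Borel ideal closed under deleting the variable \<open>x\<^sub>0\<close>; this is what \<open>sat n J = J\<close> amounts to,
  and it is the form in which saturation is used throughout.\<close>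
definition sat_borel :: "nat \<Rightarrow> (nat \<Rightarrow> nat) set \<Rightarrow> bool" where
  "sat_borel n J \<longleftrightarrow> borel n J \<and> (\<forall>b\<in>J. b(0 := 0) \<in> J)"

lemma borel_mon_ideal: "borel n J \<Longrightarrow> mon_ideal n J"
  unfolding borel_def by simp

lemma sat_borel_if_sat:
  assumes B: "borel n J" and S: "sat n J = J"
  shows "sat_borel n J"
  unfolding sat_borel_def
proof (intro conjI ballI)
  fix b assume b: "b \<in> J"
  have J: "mon_ideal n J" using B borel_mon_ideal by auto
  obtain g where g: "g \<in> min_gens J" "g \<le> b" using exists_min_gen[OF J b] by blast
  have "g(0:=0) \<le> b(0:=0)" using g(2) unfolding le_fun_def by auto
  moreover have "b(0:=0) \<in> mons n" using J b mon_ideal_sub mons_upd by blast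
  ultimately have "b(0:=0) \<in> sat n J" unfolding sat_def gen_ideal_def using g(1) by blast
  then show "b(0:=0) \<in> J" using S by simp
qed (rule B)

lemma sat_borel_mon_ideal: "sat_borel n J \<Longrightarrow> mon_ideal n J"
  unfolding sat_borel_def borel_def by simp

lemma sat_borel_sub: "sat_borel n J \<Longrightarrow> J \<subseteq> mons n"
  using sat_borel_mon_ideal mon_ideal_sub by blast

lemma sat_borel_upward: "sat_borel n J \<Longrightarrow> a \<in> J \<Longrightarrow> a \<le> c \<Longrightarrow> c \<in> mons n \<Longrightarrow> c \<in> J"
  using sat_borel_mon_ideal mon_ideal_upward by blast

lemma sat_borel_x0: "sat_borel n J \<Longrightarrow> b \<in> J \<Longrightarrow> b(0 := 0) \<in> J"
  unfolding sat_borel_def by simp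

lemma sat_borel_x0_iff:
  assumes s: "sat_borel n J" and b: "b \<in> mons n"
  shows "b(0 := 0) \<in> J \<longleftrightarrow> b \<in> J"
proof
  assume "b(0 := 0) \<in> J"
  moreover have "b(0 := 0) \<le> b" unfolding le_fun_def by auto
  ultimately show "b \<in> J" using sat_borel_upward[OF s _ _ b] by blast
qed (rule sat_borel_x0[OF s])

lemma min_gen_x0:
  assumes s: "sat_borel n J" and g: "g \<in> min_gens J"
  shows "g 0 = 0"
proof -
  have "g(0 := 0) \<in> J" using sat_borel_x0[OF s] g unfolding min_gens_def by simp
  moreover have "g(0 := 0) \<le> g" unfolding le_fun_def by auto
  ultimately have "g(0 := 0) = g" using g unfolding min_gens_def by blast
  then show ?thesis by (metis fun_upd_same)
qed

lemma borel_step: "borel n J \<Longrightarrow> b \<in> J \<Longrightarrow> j < n \<Longrightarrow> b j > 0 \<Longrightarrow>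
   b(j := b j - 1, Suc j := b (Suc j) + 1) \<in> J"
  unfolding borel_def by blast

lemma borel_move:
  assumes B: "borel n J" and b: "b \<in> J" and ij: "i < j" "j \<le> n" and bi: "b i > 0"
  shows "b(i := b i - 1, j := b j + 1) \<in> J"
  using ij
proof (induction j)
  case (Suc j)
  show ?case
  proof (cases "j = i")
    case True
    then have "i < n" using Suc.prems by simp
    from borel_step[OF B b this bi] show ?thesis unfolding True .
  next
    case False
    then have ij': "i < j" "j < n" using Suc.prems by auto
    let ?b = "b(i := b i - 1, j := b j + 1)"
    have bJ: "?b \<in> J" using ij' by (intro Suc.IH) auto
    have pos: "?b j > 0" using ij' by simp
    have moved: "?b(j := ?b j - 1, Suc j := ?b (Suc j) + 1) \<in> J"
      using borel_step[OF B bJ ij'(2) pos] .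
    have "?b(j := ?b j - 1, Suc j := ?b (Suc j) + 1) = b(i := b i - 1, Suc j := b (Suc j) + 1)"
      using ij' by (auto simp: fun_eq_iff)
    with moved show ?thesis by (simp only:)
  qed
qed simp

lemma borel_move_many:
  assumes B: "borel n J" and ij: "i < j" "j \<le> n" and b: "b \<in> J"
  shows "k \<le> b i \<Longrightarrow> b(i := b i - k, j := b j + k) \<in> J"
proof (induction k)
  case (Suc k)
  let ?b = "b(i := b i - k, j := b j + k)"
  have bJ: "?b \<in> J" using Suc.prems by (intro Suc.IH) simp
  have pos: "?b i > 0" using Suc.prems ij by simp
  have moved: "?b(i := ?b i - 1, j := ?b j + 1) \<in> J" using borel_move[OF B bJ ij pos] .
  have "?b(i := ?b i - 1, j := ?b j + 1) = b(i := b i - Suc k, j := b j + Suc k)"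
    using ij by (auto simp: fun_eq_iff)
  with moved show ?case by (simp only:)
qed (use b in simp)

lemma borel_spread:
  assumes B: "borel n J" and w: "w(1 := k) \<in> J" "w 1 = 0" and i: "1 \<le> i" "i \<le> n"
  shows "w(i := w i + k) \<in> J"
proof (cases "i = 1")
  case True then show ?thesis using w by simp
next
  case False
  then have "1 < i" using i by simp
  moreover have "k \<le> (w(1 := k)) 1" by simp
  ultimately have moved: "(w(1 := k))(1 := (w(1 := k)) 1 - k, i := (w(1 := k)) i + k) \<in> J"
    by (rule borel_move_many[OF B _ i(2) w(1)])
  have "(w(1 := k))(1 := (w(1 := k)) 1 - k, i := (w(1 := k)) i + k) = w(i := w i + k)"
    using False w(2) by (auto simp: fun_eq_iff)
  with moved show ?thesis by (simp only:)
qed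

section \<open>The \<open>x\<^sub>1\<close>-saturation\<close>

text \<open>The monomials \<open>b\<close> with \<open>b x\<^sub>1\<^sup>k \<in> J\<close> for some \<open>k\<close>, i.e. \<open>J : x\<^sub>1\<^sup>\<infinity>\<close>; for saturated Borel \<open>J\<close>
  this is the ideal \<open>J\<^sub>x\<^sub>0\<^sub>x\<^sub>1\<close> of the theorem.\<close>
definition x1_sat :: "nat \<Rightarrow> (nat \<Rightarrow> nat) set \<Rightarrow> (nat \<Rightarrow> nat) set" where
  "x1_sat n J = {b \<in> mons n. \<exists>k. b(1 := k) \<in> J}"

lemma sat01_eq_x1_sat:
  assumes s: "sat_borel n J"
  shows "sat01 n J = x1_sat n J"
proof
  show "sat01 n J \<subseteq> x1_sat n J"
  proof
    fix b assume "b \<in> sat01 n J"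
    then obtain g where b: "b \<in> mons n" and g: "g \<in> min_gens J" and le: "g(0 := 0, 1 := 0) \<le> b"
      unfolding sat01_def gen_ideal_def by blast
    have g0: "g 0 = 0" using min_gen_x0[OF s g] .
    have gJ: "g \<in> J" using g unfolding min_gens_def by simp
    have "g i \<le> (b(1 := g 1 + b 1)) i" for i
    proof (cases "i = 0 \<or> i = 1")
      case True then show ?thesis using g0 by auto
    next
      case False
      then have "(g(0 := 0, 1 := 0)) i = g i" by simp
      then show ?thesis using le False unfolding le_fun_def by (metis fun_upd_other)
    qed
    then have "g \<le> b(1 := g 1 + b 1)" unfolding le_fun_def by blast
    moreover have "b(1 := g 1 + b 1) \<in> mons n"
      using b sat_borel_sub[OF s] gJ unfolding mons_def by auto
    ultimately have "b(1 := g 1 + b 1) \<in> J" using sat_borel_upward[OF s gJ] by blast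
    then show "b \<in> x1_sat n J" using b unfolding x1_sat_def by blast
  qed
next
  show "x1_sat n J \<subseteq> sat01 n J"
  proof
    fix b assume "b \<in> x1_sat n J"
    then obtain k where b: "b \<in> mons n" and bk: "b(1 := k) \<in> J" unfolding x1_sat_def by blast
    obtain g where g: "g \<in> min_gens J" "g \<le> b(1 := k)"
      using exists_min_gen[OF sat_borel_mon_ideal[OF s] bk] by blast
    have "(g(0 := 0, 1 := 0)) i \<le> b i" for i
    proof (cases "i = 0 \<or> i = 1")
      case False
      then have "(g(0 := 0, 1 := 0)) i = g i" "(b(1 := k)) i = b i" by simp_all
      then show ?thesis using g(2) unfolding le_fun_def by metis
    qed auto
    then have "g(0 := 0, 1 := 0) \<le> b" unfolding le_fun_def by blast
    then show "b \<in> sat01 n J" unfolding sat01_def gen_ideal_def using b g(1) by blast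
  qed
qed

context
  fixes m :: nat and J :: "(nat \<Rightarrow> nat) set"
  assumes s: "sat_borel (Suc m) J"
begin

lemma subset_x1_sat: "J \<subseteq> x1_sat (Suc m) J"
proof
  fix b assume "b \<in> J"
  then have "b(1 := b 1) \<in> J" by simp
  then show "b \<in> x1_sat (Suc m) J" unfolding x1_sat_def using \<open>b \<in> J\<close> sat_borel_sub[OF s] by blast
qed

lemma x1_sat_sub: "x1_sat (Suc m) J \<subseteq> mons (Suc m)"
  unfolding x1_sat_def by auto

lemma x1_sat_x1: "b \<in> x1_sat (Suc m) J \<Longrightarrow> b(1 := x) \<in> x1_sat (Suc m) J"
  unfolding x1_sat_def using mons_upd[of b "Suc m" 1 x] by auto

lemma x1_sat_upward:
  assumes a: "a \<in> x1_sat (Suc m) J" and le: "a \<le> c" and c: "c \<in> mons (Suc m)"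
  shows "c \<in> x1_sat (Suc m) J"
proof -
  obtain k where k: "a(1 := k) \<in> J" using a unfolding x1_sat_def by blast
  have "a(1 := k) \<le> c(1 := k + c 1)" using le unfolding le_fun_def by auto
  moreover have "c(1 := k + c 1) \<in> mons (Suc m)" using mons_upd[OF c] by simp
  ultimately have "c(1 := k + c 1) \<in> J" using sat_borel_upward[OF s k] by blast
  then show ?thesis unfolding x1_sat_def using c by blast
qed

lemma x1_sat_x0: "b \<in> x1_sat (Suc m) J \<Longrightarrow> b(0 := 0) \<in> x1_sat (Suc m) J"
proof -
  assume b: "b \<in> x1_sat (Suc m) J"
  then obtain k where k: "b(1 := k) \<in> J" unfolding x1_sat_def by blast
  have "(b(1 := k))(0 := 0) \<in> J" using sat_borel_x0[OF s k] .
  moreover have "(b(1 := k))(0 := 0) = (b(0 := 0))(1 := k)" by (auto simp: fun_eq_iff)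
  moreover have "b(0 := 0) \<in> mons (Suc m)" using b x1_sat_sub mons_upd by blast
  ultimately show ?thesis unfolding x1_sat_def by auto
qed

lemma sat_borel_x1_sat: "sat_borel (Suc m) (x1_sat (Suc m) J)"
  unfolding sat_borel_def borel_def
proof (intro conjI ballI allI impI)
  let ?I = "x1_sat (Suc m) J"
  show "mon_ideal (Suc m) ?I"
    unfolding mon_ideal_def
  proof (intro conjI ballI)
    fix a b assume a: "a \<in> ?I" and b: "b \<in> mons (Suc m)"
    have "a \<in> mons (Suc m)" using a x1_sat_sub by blast
    then have "(\<lambda>i. a i + b i) \<in> mons (Suc m)" using b unfolding mons_def by simp
    moreover have "a \<le> (\<lambda>i. a i + b i)" unfolding le_fun_def by simp
    ultimately show "(\<lambda>i. a i + b i) \<in> ?I" using x1_sat_upward[OF a] by blast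
  qed (rule x1_sat_sub)
  fix b assume b: "b \<in> ?I"
  then show "b(0 := 0) \<in> ?I" by (rule x1_sat_x0)
  fix j assume j: "j < Suc m" and bj: "0 < b j"
  have bm: "b \<in> mons (Suc m)" using b x1_sat_sub by blast
  let ?b = "b(j := b j - 1, Suc j := b (Suc j) + 1)"
  have bm': "?b \<in> mons (Suc m)" using bm j unfolding mons_def by auto
  obtain k where k: "b(1 := k) \<in> J" using b unfolding x1_sat_def by blast
  have B: "borel (Suc m) J" using s unfolding sat_borel_def by simp
  have "?b(1 := k) \<in> J"
  proof (cases "j = 0 \<or> j = 1")
    case True
    have "(b(1 := k))(0 := 0) \<in> J" using sat_borel_x0[OF s k] .
    moreover have "(b(1 := k))(0 := 0) \<le> ?b(1 := k)" using True unfolding le_fun_def by auto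
    ultimately show ?thesis using sat_borel_upward[OF s] mons_upd[OF bm'] by simp
  next
    case False
    have "(b(1 := k)) j > 0" using bj False by simp
    then have "(b(1 := k))(j := (b(1 := k)) j - 1, Suc j := (b(1 := k)) (Suc j) + 1) \<in> J"
      using borel_step[OF B k j] by blast
    moreover have "(b(1 := k))(j := (b(1 := k)) j - 1, Suc j := (b(1 := k)) (Suc j) + 1) = ?b(1 := k)"
      using False by (auto simp: fun_eq_iff)
    ultimately show ?thesis by simp
  qed
  then show "?b \<in> ?I" unfolding x1_sat_def using bm' by blast
qed

end

section \<open>The \<open>x\<^sub>0\<close>-section\<close>

text \<open>Monomials in \<open>x\<^sub>1, \<dots>, x\<^sub>m\<^sub>+\<^sub>1\<close> are identified with monomials in \<open>m + 1\<close> variables by shifting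
  indices down; the \<open>x\<^sub>0\<close>-section of \<open>I\<close> is the set of \<open>x\<^sub>0\<close>-free monomials of \<open>I\<close>, shifted.
  It is the monomial ideal \<open>(I + (x\<^sub>0)) / (x\<^sub>0)\<close> in one variable fewer.\<close>

definition shift :: "(nat \<Rightarrow> nat) \<Rightarrow> nat \<Rightarrow> nat" where
  "shift c = (\<lambda>i. if i = 0 then 0 else c (i - 1))"

definition unshift :: "(nat \<Rightarrow> nat) \<Rightarrow> nat \<Rightarrow> nat" where
  "unshift b = (\<lambda>i. b (Suc i))"

definition x0_section :: "nat \<Rightarrow> (nat \<Rightarrow> nat) set \<Rightarrow> (nat \<Rightarrow> nat) set" where
  "x0_section m I = {c \<in> mons m. shift c \<in> I}"

lemma unshift_shift [simp]: "unshift (shift c) = c"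
  unfolding shift_def unshift_def by auto

lemma unshift_shift_upd [simp]: "unshift ((shift c)(0 := x)) = c"
  unfolding shift_def unshift_def by auto

lemma shift_unshift: "shift (unshift b) = b(0 := 0)"
  unfolding shift_def unshift_def by (auto simp: fun_eq_iff)

lemma shift_mono: "c' \<le> c \<Longrightarrow> shift c' \<le> shift c"
  unfolding le_fun_def shift_def by auto

lemma mdeg_Suc: "mdeg (Suc m) b = b 0 + mdeg m (unshift b)"
  unfolding mdeg_def unshift_def by (rule sum.atMost_Suc_shift)

lemma mdeg_shift: "mdeg (Suc m) (shift c) = mdeg m c"
proof -
  have "shift c 0 = 0" by (simp add: shift_def)
  then show ?thesis using mdeg_Suc[of m "shift c"] by simp
qed

lemma shift_mons: "c \<in> mons m \<Longrightarrow> shift c \<in> mons (Suc m)"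
  unfolding mons_def shift_def by auto

lemma unshift_mons: "b \<in> mons (Suc m) \<Longrightarrow> unshift b \<in> mons m"
  unfolding mons_def unshift_def by auto

lemma mem_iff_x0_section:
  assumes s: "sat_borel (Suc m) I" and b: "b \<in> mons (Suc m)"
  shows "b \<in> I \<longleftrightarrow> unshift b \<in> x0_section m I"
  using sat_borel_x0_iff[OF s b] unshift_mons[OF b] shift_unshift[of b]
  unfolding x0_section_def by simp

text \<open>Hence the Hilbert function of \<open>S/I\<close> is the summatory function of that of the section:
  a monomial of degree \<open>d\<close> outside \<open>I\<close> is \<open>x\<^sub>0\<^sup>d\<^sup>-\<^sup>e\<close> times a monomial of degree \<open>e \<le> d\<close> outside the section.\<close>
lemma hilb_fun_x0_section:
  assumes s: "sat_borel (Suc m) I"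
  shows "hilb_fun (Suc m) I d = (\<Sum>e\<le>d. hilb_fun m (x0_section m I) e)"
proof -
  let ?T = "x0_section m I"
  let ?A = "{a \<in> mons (Suc m) - I. mdeg (Suc m) a = d}"
  let ?B = "\<lambda>e. {c \<in> mons m - ?T. mdeg m c = e}"
  have "bij_betw (\<lambda>b. (d - b 0, unshift b)) ?A (Sigma {..d} ?B)"
  proof (rule bij_betw_byWitness[where f' = "\<lambda>(e, c). (shift c)(0 := d - e)"])
    show "\<forall>a\<in>?A. (\<lambda>(e, c). (shift c)(0 := d - e)) (d - a 0, unshift a) = a"
    proof
      fix a assume a: "a \<in> ?A"
      have "a 0 \<le> d" using a mdeg_Suc[of m a] by auto
      then show "(\<lambda>(e, c). (shift c)(0 := d - e)) (d - a 0, unshift a) = a"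
        by (auto simp: shift_unshift fun_eq_iff)
    qed
    show "(\<lambda>b. (d - b 0, unshift b)) ` ?A \<subseteq> Sigma {..d} ?B"
      using mdeg_Suc[of m] mem_iff_x0_section[OF s] unshift_mons by fastforce
    show "(\<lambda>(e, c). (shift c)(0 := d - e)) ` Sigma {..d} ?B \<subseteq> ?A"
    proof
      fix x assume "x \<in> (\<lambda>(e, c). (shift c)(0 := d - e)) ` Sigma {..d} ?B"
      then obtain e c where e: "e \<le> d" and c: "c \<in> mons m" "c \<notin> ?T" "mdeg m c = e"
        and x: "x = (shift c)(0 := d - e)" by auto
      have xm: "x \<in> mons (Suc m)" using x mons_upd[OF shift_mons[OF c(1)]] by simp
      have "unshift x = c" using x by simp
      then show "x \<in> ?A"
        using mem_iff_x0_section[OF s xm] mdeg_Suc[of m x] c e x xm by simp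
    qed
  qed auto
  then have "card ?A = card (Sigma {..d} ?B)" by (rule bij_betw_same_card)
  also have "\<dots> = (\<Sum>e\<le>d. card (?B e))"
  proof (rule card_SigmaI)
    show "\<forall>e\<in>{..d}. finite (?B e)" by (intro ballI finite_mons_deg_eq) blast
  qed simp
  finally show ?thesis unfolding hilb_fun_def by simp
qed

text \<open>The section of an \<open>x\<^sub>1\<close>-saturation is a saturated Borel ideal in one variable fewer:
  the role of \<open>x\<^sub>0\<close> is taken over by \<open>x\<^sub>1\<close>.\<close>
lemma sat_borel_x0_section:
  assumes s: "sat_borel (Suc m) J"
  shows "sat_borel m (x0_section m (x1_sat (Suc m) J))"
  unfolding sat_borel_def borel_def mon_ideal_def
proof (intro conjI ballI allI impI)
  let ?I = "x1_sat (Suc m) J"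
  show "x0_section m ?I \<subseteq> mons m" unfolding x0_section_def by auto
  fix c assume c: "c \<in> x0_section m ?I"
  then have cm: "c \<in> mons m" and cI: "shift c \<in> ?I" unfolding x0_section_def by auto
  {
    fix d assume d: "d \<in> mons m"
    have cdm: "(\<lambda>i. c i + d i) \<in> mons m" using cm d unfolding mons_def by auto
    have "shift c \<le> shift (\<lambda>i. c i + d i)" by (rule shift_mono) (simp add: le_fun_def)
    then have "shift (\<lambda>i. c i + d i) \<in> ?I" using x1_sat_upward[OF s cI] shift_mons[OF cdm] by blast
    with cdm show "(\<lambda>i. c i + d i) \<in> x0_section m ?I" unfolding x0_section_def by blast
  }
  {
    have "shift (c(0 := 0)) = (shift c)(1 := 0)" unfolding shift_def by (auto simp: fun_eq_iff)
    moreover have "(shift c)(1 := 0) \<in> ?I" using x1_sat_x1[OF s cI] .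
    moreover have "c(0 := 0) \<in> mons m" using cm unfolding mons_def by auto
    ultimately show "c(0 := 0) \<in> x0_section m ?I" unfolding x0_section_def by simp
  }
  {
    fix j assume j: "j < m" and cj: "0 < c j"
    let ?c = "c(j := c j - 1, Suc j := c (Suc j) + 1)"
    have BI: "borel (Suc m) ?I" using sat_borel_x1_sat[OF s] unfolding sat_borel_def by simp
    have "(shift c) (Suc j) > 0" "Suc j < Suc m" using cj j by (simp_all add: shift_def)
    then have "(shift c)(Suc j := (shift c) (Suc j) - 1, Suc (Suc j) := (shift c) (Suc (Suc j)) + 1) \<in> ?I"
      using borel_step[OF BI cI] by blast
    moreover have "(shift c)(Suc j := (shift c) (Suc j) - 1, Suc (Suc j) := (shift c) (Suc (Suc j)) + 1)
      = shift ?c" unfolding shift_def by (auto simp: fun_eq_iff)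
    moreover have "?c \<in> mons m" using cm j unfolding mons_def by auto
    ultimately show "?c \<in> x0_section m ?I" unfolding x0_section_def by simp
  }
qed

section \<open>The gap set\<close>

definition gaps :: "nat \<Rightarrow> (nat \<Rightarrow> nat) set \<Rightarrow> (nat \<Rightarrow> nat) set" where
  "gaps n J = {b \<in> x1_sat n J - J. b 0 = 0}"

context
  fixes m :: nat and J :: "(nat \<Rightarrow> nat) set"
  assumes s: "sat_borel (Suc m) J"
begin

lemma gaps_sub: "gaps (Suc m) J \<subseteq> mons (Suc m)"
  unfolding gaps_def using x1_sat_sub[OF s] by auto

text \<open>Deleting \<open>x\<^sub>0\<close> maps the degree-\<open>d\<close> part of \<open>J\<^sub>x\<^sub>0\<^sub>x\<^sub>1 - J\<close> bijectively onto the gaps of degree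
  \<open>\<le> d\<close>; the inverse multiplies by the missing power of \<open>x\<^sub>0\<close>.\<close>
lemma card_x1_sat_diff_deg:
  "card {b \<in> x1_sat (Suc m) J - J. mdeg (Suc m) b = d} = card {f \<in> gaps (Suc m) J. mdeg (Suc m) f \<le> d}"
proof -
  let ?I = "x1_sat (Suc m) J"
  let ?A = "{b \<in> ?I - J. mdeg (Suc m) b = d}"
  let ?B = "{f \<in> gaps (Suc m) J. mdeg (Suc m) f \<le> d}"
  have x0I: "b(0 := 0) \<in> ?I \<longleftrightarrow> b \<in> ?I" if "b \<in> mons (Suc m)" for b
    using sat_borel_x0_iff[OF sat_borel_x1_sat[OF s] that] .
  have x0J: "b(0 := 0) \<in> J \<longleftrightarrow> b \<in> J" if "b \<in> mons (Suc m)" for b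
    using sat_borel_x0_iff[OF s that] .
  have deg0: "mdeg (Suc m) (a(0 := 0)) + a 0 = mdeg (Suc m) a" for a
    using mdeg_upd[of 0 "Suc m" a 0] by simp
  have "bij_betw (\<lambda>b. b(0 := 0)) ?A ?B"
  proof (rule bij_betw_byWitness[where f' = "\<lambda>f. f(0 := d - mdeg (Suc m) f)"])
    show "\<forall>a\<in>?A. (a(0 := 0))(0 := d - mdeg (Suc m) (a(0 := 0))) = a"
    proof
      fix a assume "a \<in> ?A"
      then show "(a(0 := 0))(0 := d - mdeg (Suc m) (a(0 := 0))) = a"
        using deg0[of a] by (auto simp: fun_eq_iff)
    qed
    show "\<forall>a\<in>?B. (a(0 := d - mdeg (Suc m) a))(0 := 0) = a"
      unfolding gaps_def by (auto simp: fun_eq_iff)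
    show "(\<lambda>b. b(0 := 0)) ` ?A \<subseteq> ?B"
    proof
      fix x assume "x \<in> (\<lambda>b. b(0 := 0)) ` ?A"
      then obtain a where a: "a \<in> ?A" and x: "x = a(0 := 0)" by blast
      have am: "a \<in> mons (Suc m)" using a x1_sat_sub[OF s] by auto
      have "mdeg (Suc m) x \<le> mdeg (Suc m) a" using x deg0[of a] by simp
      then show "x \<in> ?B" unfolding gaps_def using a x x0I[OF am] x0J[OF am] by auto
    qed
    show "(\<lambda>f. f(0 := d - mdeg (Suc m) f)) ` ?B \<subseteq> ?A"
    proof
      fix x assume "x \<in> (\<lambda>f. f(0 := d - mdeg (Suc m) f)) ` ?B"
      then obtain f where f: "f \<in> ?B" and x: "x = f(0 := d - mdeg (Suc m) f)" by blast
      have fm: "f \<in> mons (Suc m)" using f gaps_sub by auto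
      have xm: "x \<in> mons (Suc m)" using mons_upd[OF fm] x by simp
      have f0: "f 0 = 0" using f unfolding gaps_def by simp
      have "x(0 := 0) = f" using x f0 by (auto simp: fun_eq_iff)
      then have "x \<in> ?I - J" using f x0I[OF xm] x0J[OF xm] unfolding gaps_def by auto
      moreover have "mdeg (Suc m) x = d" using mdeg_upd[of 0 "Suc m" f "d - mdeg (Suc m) f"] f f0 x by simp
      ultimately show "x \<in> ?A" by simp
    qed
  qed
  then show ?thesis by (rule bij_betw_same_card)
qed

lemma hilb_fun_via_gaps:
  "hilb_fun (Suc m) J d = hilb_fun (Suc m) (x1_sat (Suc m) J) d + card {f \<in> gaps (Suc m) J. mdeg (Suc m) f \<le> d}"
  using hilb_fun_nested[OF subset_x1_sat[OF s] x1_sat_sub[OF s]] card_x1_sat_diff_deg by simp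

lemma dim_deg_via_gaps:
  "dim_deg (Suc m) (x1_sat (Suc m) J) d = dim_deg (Suc m) J d + card {f \<in> gaps (Suc m) J. mdeg (Suc m) f \<le> d}"
  using dim_deg_nested[OF subset_x1_sat[OF s] x1_sat_sub[OF s]] card_x1_sat_diff_deg by simp

end

text \<open>Assume every element of the \<open>x\<^sub>0\<close>-section of \<open>I = J\<^sub>x\<^sub>0\<^sub>x\<^sub>1\<close> is divisible by an element of degree
  \<open>\<le> t\<close>.  Then the gap set is finite, and every gap is connected to a monomial of degree \<open>\<le> t\<close>
  of \<open>I\<close> by a chain of gaps with one element in each degree; this bounds the degrees of the gaps
  and of the generators of \<open>J\<close> in terms of \<open>t\<close> and the number of gaps.\<close>

context
  fixes m t :: nat and J :: "(nat \<Rightarrow> nat) set"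
  assumes s: "sat_borel (Suc m) J"
    and section_gens: "\<forall>c\<in>x0_section m (x1_sat (Suc m) J).
      \<exists>c'\<in>x0_section m (x1_sat (Suc m) J). c' \<le> c \<and> mdeg m c' \<le> t"
begin

lemma small_x01_free_divisor:
  assumes b: "b \<in> x1_sat (Suc m) J"
  shows "\<exists>w\<in>x1_sat (Suc m) J. w \<le> b \<and> w 0 = 0 \<and> w 1 = 0 \<and> mdeg (Suc m) w \<le> t"
proof -
  let ?I = "x1_sat (Suc m) J"
  let ?b = "b(0 := 0, 1 := 0)"
  have bI: "?b \<in> ?I" using x1_sat_x1[OF s x1_sat_x0[OF s b]] .
  have bm: "?b \<in> mons (Suc m)" using bI x1_sat_sub[OF s] by blast
  have sb: "shift (unshift ?b) = ?b" using shift_unshift[of ?b] by (auto simp: fun_eq_iff)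
  then have "unshift ?b \<in> x0_section m ?I" unfolding x0_section_def using unshift_mons[OF bm] bI by simp
  then obtain c' where c': "c' \<in> x0_section m ?I" "c' \<le> unshift ?b" "mdeg m c' \<le> t"
    using section_gens by blast
  have le: "shift c' \<le> ?b" using shift_mono[OF c'(2)] sb by simp
  have "?b \<le> b" unfolding le_fun_def by auto
  moreover have "shift c' 1 = 0" using le unfolding le_fun_def by (metis fun_upd_same le_zero_eq)
  moreover have "shift c' 0 = 0" by (simp add: shift_def)
  ultimately show ?thesis
    using c'(1,3) le order.trans mdeg_shift[of m c'] unfolding x0_section_def by fastforce
qed

text \<open>Every coordinate of a gap is bounded: if \<open>w \<le> f\<close> is as above and \<open>w x\<^sub>1\<^sup>k \<in> J\<close>, then by Borel
  moves \<open>w x\<^sub>i\<^sup>k \<in> J\<close>, so \<open>f\<^sub>i < w\<^sub>i + k\<close>, as \<open>f \<notin> J\<close>.\<close>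
lemma gaps_finite: "finite (gaps (Suc m) J)"
proof -
  let ?I = "x1_sat (Suc m) J"
  let ?W = "{w \<in> ?I. w 0 = 0 \<and> w 1 = 0 \<and> mdeg (Suc m) w \<le> t}"
  have Wfin: "finite ?W"
    by (rule finite_subset[OF _ finite_mons_deg[of "Suc m" t]]) (use x1_sat_sub[OF s] in auto)
  have "\<forall>w\<in>?W. \<exists>k. w(1 := k) \<in> J" unfolding x1_sat_def by blast
  from bchoice[OF this] obtain k where k: "\<forall>w\<in>?W. w(1 := k w) \<in> J" by blast
  define K where "K = (\<Sum>w\<in>?W. k w)"
  have B: "borel (Suc m) J" using s unfolding sat_borel_def by simp
  have bound: "f i \<le> t + K" if f: "f \<in> gaps (Suc m) J" and i: "i \<le> Suc m" for f i
  proof (cases "i = 0")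
    case True then show ?thesis using f unfolding gaps_def by simp
  next
    case False
    have fI: "f \<in> ?I" and fJ: "f \<notin> J" using f unfolding gaps_def by auto
    have fm: "f \<in> mons (Suc m)" using fI x1_sat_sub[OF s] by blast
    obtain w where w: "w \<in> ?I" "w \<le> f" "w 0 = 0" "w 1 = 0" "mdeg (Suc m) w \<le> t"
      using small_x01_free_divisor[OF fI] by blast
    then have wW: "w \<in> ?W" by simp
    have wk: "w(1 := k w) \<in> J" using k wW by blast
    have "w(i := w i + k w) \<in> J" using borel_spread[OF B wk w(4)] False i by simp
    then have "\<not> w(i := w i + k w) \<le> f" using fJ sat_borel_upward[OF s _ _ fm] by blast
    then have "f i < w i + k w" using w(2) unfolding le_fun_def by (metis fun_upd_apply not_le)
    moreover have "w i \<le> t" using mdeg_coord_le[OF i, of w] w(5) by simp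
    moreover have "k w \<le> K" unfolding K_def using Wfin wW by (intro member_le_sum) auto
    ultimately show ?thesis by simp
  qed
  have "gaps (Suc m) J \<subseteq> {a \<in> mons (Suc m). mdeg (Suc m) a \<le> Suc (Suc m) * (t + K)}"
  proof
    fix f assume f: "f \<in> gaps (Suc m) J"
    have "mdeg (Suc m) f \<le> (\<Sum>i\<le>Suc m. t + K)" unfolding mdeg_def
      using bound[OF f] by (intro sum_mono) auto
    then show "f \<in> {a \<in> mons (Suc m). mdeg (Suc m) a \<le> Suc (Suc m) * (t + K)}"
      using f gaps_sub[OF s] by auto
  qed
  then show ?thesis using finite_mons_deg finite_subset by blast
qed

lemma gaps_between:
  assumes w: "w \<in> x1_sat (Suc m) J" and wg: "w \<le> g" and g: "g \<in> mons (Suc m)" "g 0 = 0"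
    and h: "h \<le> mdeg (Suc m) g"
    and notJ: "\<And>v. w \<le> v \<Longrightarrow> v \<le> g \<Longrightarrow> mdeg (Suc m) v \<le> h \<Longrightarrow> v \<notin> J"
  shows "h + 1 - mdeg (Suc m) w \<le> card {v \<in> gaps (Suc m) J. mdeg (Suc m) v \<le> h}"
proof (rule card_ge_degree_range[where deg = "mdeg (Suc m)"])
  show "finite {v \<in> gaps (Suc m) J. mdeg (Suc m) v \<le> h}" using gaps_finite by simp
  fix e assume e: "mdeg (Suc m) w \<le> e" "e \<le> h"
  obtain v where v: "w \<le> v" "v \<le> g" "mdeg (Suc m) v = e"
    using intermediate_mon[OF g(1) wg e(1)] e(2) h by auto
  have "v \<in> x1_sat (Suc m) J" using x1_sat_upward[OF s w v(1) mons_downward[OF g(1) v(2)]] .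
  moreover have "v \<notin> J" using notJ v e by simp
  moreover have "v 0 = 0" using v(2) g(2) unfolding le_fun_def by (metis le_zero_eq)
  ultimately show "\<exists>v'\<in>{v \<in> gaps (Suc m) J. mdeg (Suc m) v \<le> h}. mdeg (Suc m) v' = e"
    using v(3) e(2) unfolding gaps_def by auto
qed

lemma gaps_below_gap:
  assumes f: "f \<in> gaps (Suc m) J"
  shows "min d (mdeg (Suc m) f) + 1 - t \<le> card {v \<in> gaps (Suc m) J. mdeg (Suc m) v \<le> d}"
proof -
  have fI: "f \<in> x1_sat (Suc m) J" and fJ: "f \<notin> J" and f0: "f 0 = 0" using f unfolding gaps_def by auto
  have fm: "f \<in> mons (Suc m)" using fI x1_sat_sub[OF s] by blast
  obtain w where w: "w \<in> x1_sat (Suc m) J" "w \<le> f" "mdeg (Suc m) w \<le> t"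
    using small_x01_free_divisor[OF fI] by blast
  have "min d (mdeg (Suc m) f) + 1 - mdeg (Suc m) w
      \<le> card {v \<in> gaps (Suc m) J. mdeg (Suc m) v \<le> min d (mdeg (Suc m) f)}"
    using fJ sat_borel_upward[OF s _ _ fm] by (intro gaps_between[OF w(1,2) fm f0]) auto
  also have "\<dots> \<le> card {v \<in> gaps (Suc m) J. mdeg (Suc m) v \<le> d}"
    using gaps_finite by (intro card_mono) auto
  finally show ?thesis using w(3) by linarith
qed

lemma gap_degree_bound: "f \<in> gaps (Suc m) J \<Longrightarrow> mdeg (Suc m) f + 1 \<le> t + card (gaps (Suc m) J)"
  using gaps_below_gap[of f "mdeg (Suc m) f"] card_mono[OF gaps_finite, of "{v \<in> gaps (Suc m) J. mdeg (Suc m) v \<le> mdeg (Suc m) f}"]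
  by auto

lemma gaps_count_lower:
  "min (Suc d - t) (card (gaps (Suc m) J)) \<le> card {f \<in> gaps (Suc m) J. mdeg (Suc m) f \<le> d}"
proof (cases "\<forall>f\<in>gaps (Suc m) J. mdeg (Suc m) f \<le> d")
  case True
  then have "{f \<in> gaps (Suc m) J. mdeg (Suc m) f \<le> d} = gaps (Suc m) J" by auto
  then show ?thesis by simp
next
  case False
  then obtain f where "f \<in> gaps (Suc m) J" "d < mdeg (Suc m) f" by auto
  then show ?thesis using gaps_below_gap[of f d] by simp
qed

text \<open>Every element of \<open>J\<close> has a divisor in \<open>J\<close> of degree \<open>\<le> t + #gaps\<close>: a divisor \<open>g\<close> of least
  degree above a small \<open>w \<in> I\<close> has gaps between \<open>w\<close> and \<open>g\<close> in all degrees below \<open>deg g\<close>.\<close>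
lemma gens_degree_bound:
  assumes b: "b \<in> J"
  shows "\<exists>g\<in>J. g \<le> b \<and> mdeg (Suc m) g \<le> t + card (gaps (Suc m) J)"
proof -
  let ?b = "b(0 := 0)"
  have bJ: "?b \<in> J" using sat_borel_x0[OF s b] .
  obtain w where w: "w \<in> x1_sat (Suc m) J" "w \<le> ?b" "mdeg (Suc m) w \<le> t"
    using small_x01_free_divisor[of ?b] subset_x1_sat[OF s] bJ by blast
  let ?P = "\<lambda>g. g \<in> J \<and> w \<le> g \<and> g \<le> ?b"
  define g where "g = arg_min (mdeg (Suc m)) ?P"
  have gP: "?P g" and gmin: "\<And>h. ?P h \<Longrightarrow> mdeg (Suc m) g \<le> mdeg (Suc m) h"
    using arg_min_nat_lemma[of ?P ?b "mdeg (Suc m)"] bJ w(2) unfolding g_def by auto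
  have gm: "g \<in> mons (Suc m)" using gP sat_borel_sub[OF s] by blast
  have g0: "g 0 = 0" using gP unfolding le_fun_def by (metis fun_upd_same le_zero_eq)
  have gb: "g \<le> b" using gP order.trans[of g ?b b] by (auto simp: le_fun_def)
  show ?thesis
  proof (cases "mdeg (Suc m) g \<le> t")
    case True then show ?thesis using gP gb by auto
  next
    case False
    have "mdeg (Suc m) g - 1 + 1 - mdeg (Suc m) w
        \<le> card {v \<in> gaps (Suc m) J. mdeg (Suc m) v \<le> mdeg (Suc m) g - 1}"
    proof (rule gaps_between[OF w(1) _ gm g0])
      show "w \<le> g" using gP by simp
      fix v assume v: "w \<le> v" "v \<le> g" "mdeg (Suc m) v \<le> mdeg (Suc m) g - 1"
      show "v \<notin> J"
      proof
        assume "v \<in> J"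
        then have "mdeg (Suc m) g \<le> mdeg (Suc m) v" using v gP by (intro gmin) (blast intro: order.trans)
        then show False using v(3) False by linarith
      qed
    qed simp
    also have "\<dots> \<le> card (gaps (Suc m) J)" using gaps_finite by (intro card_mono) auto
    finally have "mdeg (Suc m) g \<le> t + card (gaps (Suc m) J)" using w(3) False by linarith
    then show ?thesis using gP gb by blast
  qed
qed

end

section \<open>Gotzmann sums\<close>

text \<open>The Gotzmann sum \<open>\<Sum>\<^sub>i\<^sub>=\<^sub>1\<^sup>r C(d + a\<^sub>i - (i - 1), a\<^sub>i)\<close> (with truncated subtraction), its truncation to
  the summands with \<open>i \<le> d + 1\<close>, and the summatory function of a Gotzmann sum.\<close>

definition gotz :: "(nat \<Rightarrow> nat) \<Rightarrow> nat \<Rightarrow> nat \<Rightarrow> nat" where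
  "gotz a r d = (\<Sum>i\<in>{1..r}. (d + a i - (i - 1)) choose a i)"

definition gotz_trunc :: "(nat \<Rightarrow> nat) \<Rightarrow> nat \<Rightarrow> nat \<Rightarrow> nat" where
  "gotz_trunc a r d = (\<Sum>i\<in>{1..min r (Suc d)}. (d + a i - (i - 1)) choose a i)"

definition gotz_cumul :: "(nat \<Rightarrow> nat) \<Rightarrow> nat \<Rightarrow> nat \<Rightarrow> nat" where
  "gotz_cumul b t d = (\<Sum>i\<in>{1..min t (Suc d)}. (d + (b i + 1) - (i - 1)) choose (b i + 1))"

definition nonincr :: "(nat \<Rightarrow> nat) \<Rightarrow> nat \<Rightarrow> bool" where
  "nonincr a r \<longleftrightarrow> (\<forall>i j. 1 \<le> i \<longrightarrow> i \<le> j \<longrightarrow> j \<le> r \<longrightarrow> a j \<le> a i)"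

lemma gotz_trunc_eq_gotz: "r \<le> Suc d \<Longrightarrow> gotz_trunc a r d = gotz a r d"
  unfolding gotz_trunc_def gotz_def by (simp add: min_def)

lemma pascal_step:
  assumes "i - 1 \<le> Suc d"
  shows "(Suc d + (x + 1) - (i - 1)) choose (x + 1) =
         ((Suc d + x - (i - 1)) choose x) + ((d + (x + 1) - (i - 1)) choose (x + 1))"
proof -
  define N where "N = Suc d + x - (i - 1)"
  have 1: "Suc d + (x + 1) - (i - 1) = Suc N" using assms unfolding N_def by simp
  have 2: "d + (x + 1) - (i - 1) = N" using assms unfolding N_def by simp
  show ?thesis unfolding 1 2 N_def[symmetric] by simp
qed

text \<open>Hockey-stick identity: the summatory function of the truncated sum for \<open>b\<close> is the cumulative
  sum, i.e. the Gotzmann sum for \<open>b + 1\<close>.\<close>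
lemma sum_gotz_trunc: "(\<Sum>e\<le>d. gotz_trunc b t e) = gotz_cumul b t d"
proof (induction d)
  case 0
  show ?case by (cases t) (simp_all add: gotz_trunc_def gotz_cumul_def)
next
  case (Suc d)
  let ?S' = "{1..min t (Suc (Suc d))}"
  have "gotz_cumul b t (Suc d) = (\<Sum>i\<in>?S'. ((Suc d + b i - (i - 1)) choose b i)
      + ((d + (b i + 1) - (i - 1)) choose (b i + 1)))"
    unfolding gotz_cumul_def by (intro sum.cong refl pascal_step) auto
  also have "\<dots> = gotz_trunc b t (Suc d) + (\<Sum>i\<in>?S'. (d + (b i + 1) - (i - 1)) choose (b i + 1))"
    by (simp add: sum.distrib gotz_trunc_def)
  also have "(\<Sum>i\<in>?S'. (d + (b i + 1) - (i - 1)) choose (b i + 1)) = gotz_cumul b t d"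
  proof (cases "t \<le> Suc d")
    case True
    then have eq: "?S' = {1..min t (Suc d)}" by (simp add: min_def)
    show ?thesis unfolding gotz_cumul_def eq ..
  next
    case False
    then have "?S' = insert (Suc (Suc d)) {1..min t (Suc d)}" "min t (Suc d) = Suc d" by auto
    then show ?thesis unfolding gotz_cumul_def by simp
  qed
  finally show ?case using Suc.IH by simp
qed

lemma sum_atMost_eventually_zero:
  fixes g :: "nat \<Rightarrow> nat"
  assumes "\<And>e. N \<le> e \<Longrightarrow> g e = 0" and "N \<le> d"
  shows "(\<Sum>e\<le>d. g e) = (\<Sum>e<N. g e)"
proof -
  have "{..d} = {..<N} \<union> {N..d}" using assms(2) by auto
  then have "(\<Sum>e\<le>d. g e) = sum g ({..<N} \<union> {N..d})" by simp
  also have "\<dots> = (\<Sum>e<N. g e) + (\<Sum>e\<in>{N..d}. g e)"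
    by (rule sum.union_disjoint) auto
  also have "(\<Sum>e\<in>{N..d}. g e) = 0" using assms(1) by simp
  finally show ?thesis by simp
qed

lemma gotz_trunc_lift:
  assumes tr: "t \<le> r"
  shows "gotz_trunc (\<lambda>i. if i \<le> t then b i + 1 else 0) r d = gotz_cumul b t d + (min r (Suc d) - t)"
proof -
  let ?a = "\<lambda>i. if i \<le> t then b i + 1 else 0"
  let ?M = "min r (Suc d)"
  let ?f = "\<lambda>i. (d + ?a i - (i - 1)) choose ?a i"
  have mt: "min t ?M = min t (Suc d)" using tr by (simp add: min_def)
  have "gotz_trunc ?a r d = sum ?f ({1..min t ?M} \<union> {Suc t..?M})"
    unfolding gotz_trunc_def by (rule sum.cong) auto
  also have "\<dots> = sum ?f {1..min t ?M} + sum ?f {Suc t..?M}"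
    by (rule sum.union_disjoint) auto
  also have "sum ?f {1..min t ?M} = gotz_cumul b t d" unfolding gotz_cumul_def mt
    by (rule sum.cong) auto
  also have "sum ?f {Suc t..?M} = ?M - t" by simp
  finally show ?thesis .
qed

definition gotz_bounded :: "nat \<Rightarrow> (nat \<Rightarrow> nat) set \<Rightarrow> (nat \<Rightarrow> nat) \<Rightarrow> nat \<Rightarrow> bool" where
  "gotz_bounded n J a r \<longleftrightarrow> nonincr a r \<and> (\<forall>d. gotz_trunc a r d \<le> hilb_fun n J d)
     \<and> (\<forall>d. r \<le> Suc d \<longrightarrow> hilb_fun n J d = gotz a r d)
     \<and> (\<forall>b\<in>J. \<exists>g\<in>J. g \<le> b \<and> mdeg n g \<le> r)"

lemma hilb_fun_from_section:
  assumes s: "sat_borel (Suc m) I" and T: "gotz_bounded m (x0_section m I) b t"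
  shows "\<exists>E c. (\<forall>d. hilb_fun (Suc m) I d = gotz_cumul b t d + E d) \<and> (\<forall>d. t \<le> Suc d \<longrightarrow> E d = c)"
proof -
  let ?T = "x0_section m I"
  define err where "err e = hilb_fun m ?T e - gotz_trunc b t e" for e
  have lower: "gotz_trunc b t e \<le> hilb_fun m ?T e" for e using T unfolding gotz_bounded_def by blast
  have err0: "err e = 0" if "t - 1 \<le> e" for e
    using T that gotz_trunc_eq_gotz[of t e b] unfolding err_def gotz_bounded_def by simp
  have "hilb_fun (Suc m) I d = gotz_cumul b t d + (\<Sum>e\<le>d. err e)" for d
  proof -
    have "hilb_fun (Suc m) I d = (\<Sum>e\<le>d. gotz_trunc b t e + err e)"
      unfolding hilb_fun_x0_section[OF s] err_def using lower by (intro sum.cong) auto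
    then show ?thesis by (simp add: sum.distrib sum_gotz_trunc)
  qed
  moreover have "(\<Sum>e\<le>d. err e) = (\<Sum>e<t - 1. err e)" if "t \<le> Suc d" for d
    using that err0 by (intro sum_atMost_eventually_zero) auto
  ultimately show ?thesis
    by (intro exI[of _ "\<lambda>d. \<Sum>e\<le>d. err e"] exI[of _ "\<Sum>e<t - 1. err e"]) auto
qed

text \<open>The induction step: a Gotzmann representation of the section of \<open>J\<^sub>x\<^sub>0\<^sub>x\<^sub>1\<close> yields one of \<open>J\<close>,
  with \<open>r = t + c + #gaps\<close>; moreover all gaps have degree \<open>< r\<close>.\<close>
lemma gotz_bounded_step:
  assumes s: "sat_borel (Suc m) J" and T: "gotz_bounded m (x0_section m (x1_sat (Suc m) J)) b t"
  shows "\<exists>a r. gotz_bounded (Suc m) J a r \<and> (\<forall>f\<in>gaps (Suc m) J. mdeg (Suc m) f < r)"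
proof -
  let ?F = "gaps (Suc m) J"
  have nb: "nonincr b t" and gens: "\<forall>c\<in>x0_section m (x1_sat (Suc m) J).
      \<exists>c'\<in>x0_section m (x1_sat (Suc m) J). c' \<le> c \<and> mdeg m c' \<le> t"
    using T unfolding gotz_bounded_def by auto
  obtain E c where HI: "\<And>d. hilb_fun (Suc m) (x1_sat (Suc m) J) d = gotz_cumul b t d + E d"
    and Ec: "\<And>d. t \<le> Suc d \<Longrightarrow> E d = c"
    using hilb_fun_from_section[OF sat_borel_x1_sat[OF s] T] by blast
  define q where "q = card ?F"
  define phi where "phi d = card {f \<in> ?F. mdeg (Suc m) f \<le> d}" for d
  have HJ: "hilb_fun (Suc m) J d = gotz_cumul b t d + E d + phi d" for d
    using hilb_fun_via_gaps[OF s, of d] HI[of d] unfolding phi_def by simp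
  define a where "a i = (if i \<le> t then b i + 1 else 0)" for i
  define r where "r = t + c + q"
  have a_trunc: "gotz_trunc a r d = gotz_cumul b t d + (min r (Suc d) - t)" for d
    unfolding a_def r_def by (rule gotz_trunc_lift) simp
  have gaps_deg: "\<forall>f\<in>?F. mdeg (Suc m) f < r"
    using gap_degree_bound[OF s gens] unfolding r_def q_def by fastforce
  have "gotz_bounded (Suc m) J a r"
    unfolding gotz_bounded_def
  proof (intro conjI allI impI ballI)
    show "nonincr a r" using nb unfolding nonincr_def a_def by auto
  next
    fix d
    have "min r (Suc d) - t \<le> E d + phi d"
    proof (cases "Suc d \<le> t")
      case False
      then have "E d = c" using Ec by simp
      moreover have "min (Suc d - t) q \<le> phi d"
        using gaps_count_lower[OF s gens] unfolding phi_def q_def by blast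
      ultimately show ?thesis unfolding r_def by linarith
    qed simp
    then show "gotz_trunc a r d \<le> hilb_fun (Suc m) J d" using a_trunc HJ by simp
  next
    fix d assume rd: "r \<le> Suc d"
    have "{f \<in> ?F. mdeg (Suc m) f \<le> d} = ?F" using gaps_deg rd by fastforce
    then have "phi d = q" unfolding phi_def q_def by simp
    then show "hilb_fun (Suc m) J d = gotz a r d"
      using HJ a_trunc[of d] gotz_trunc_eq_gotz[OF rd] Ec[of d] rd unfolding r_def by simp
  next
    fix x assume "x \<in> J"
    then show "\<exists>g\<in>J. g \<le> x \<and> mdeg (Suc m) g \<le> r"
      using gens_degree_bound[OF s gens] unfolding r_def q_def by force
  qed
  with gaps_deg show ?thesis by blast
qed

text \<open>With only the variable \<open>x\<^sub>0\<close>, a saturated ideal is \<open>0\<close> or the whole ring.\<close>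
lemma gotz_bounded_base:
  assumes s: "sat_borel 0 J"
  shows "\<exists>a r. gotz_bounded 0 J a r"
proof (cases "J = {}")
  case True
  have "{a \<in> mons 0 - J. mdeg 0 a = d} = {(\<lambda>i. if i = 0 then d else 0)}" for d
    using True unfolding mons_def mdeg_def by (auto simp: fun_eq_iff)
  then have "hilb_fun 0 J d = 1" for d unfolding hilb_fun_def by simp
  then have "gotz_bounded 0 J (\<lambda>_. 0) 1"
    unfolding gotz_bounded_def nonincr_def gotz_trunc_def gotz_def using True by auto
  then show ?thesis by blast
next
  case False
  then obtain b where b: "b \<in> J" by blast
  have "b \<in> mons 0" using b sat_borel_sub[OF s] by blast
  then have "b(0 := 0) = (\<lambda>_. 0)" unfolding mons_def by auto
  then have z: "(\<lambda>_. 0) \<in> J" using sat_borel_x0[OF s b] by simp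
  have "J = mons 0"
  proof
    show "mons 0 \<subseteq> J" using sat_borel_upward[OF s z] by (auto simp: le_fun_def)
  qed (rule sat_borel_sub[OF s])
  then have "hilb_fun 0 J d = 0" for d unfolding hilb_fun_def by simp
  then have "gotz_bounded 0 J (\<lambda>_. 0) 0"
    unfolding gotz_bounded_def nonincr_def gotz_trunc_def gotz_def
    using z by (auto simp: le_fun_def mdeg_def)
  then show ?thesis by blast
qed

lemma gotz_bounded_exists: "sat_borel n J \<Longrightarrow> \<exists>a r. gotz_bounded n J a r"
proof (induction n arbitrary: J)
  case 0 then show ?case by (rule gotz_bounded_base)
next
  case (Suc m)
  obtain b t where "gotz_bounded m (x0_section m (x1_sat (Suc m) J)) b t"
    using Suc.IH[OF sat_borel_x0_section[OF Suc.prems]] by blast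
  then show ?case using gotz_bounded_step[OF Suc.prems] by blast
qed

section \<open>Uniqueness of Gotzmann representations\<close>

text \<open>Induction on \<open>a\<^sub>1 + a'\<^sub>1\<close>: if all exponents vanish the sum is the constant \<open>r\<close>,
  which cannot agree with a sum containing a positive exponent (those grow); otherwise the first
  differences are again Gotzmann sums, with all positive exponents lowered by one.\<close>

lemma choose_lower_bound: "1 \<le> k \<Longrightarrow> z + 1 \<le> (z + k) choose k"
proof (induction k)
  case (Suc k)
  show ?case
  proof (cases "k = 0")
    case False
    then have "z + 1 \<le> (z + k) choose k" using Suc.IH by simp
    also have "\<dots> \<le> (z + Suc k) choose Suc k" by simp
    finally show ?thesis .
  qed simp
qed simp

lemma gotz_flat: "(\<forall>i. 1 \<le> i \<longrightarrow> i \<le> r \<longrightarrow> a i = 0) \<Longrightarrow> gotz a r z = r"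
  unfolding gotz_def by simp

lemma gotz_ge_first: "1 \<le> r \<Longrightarrow> (z + a 1) choose (a 1) \<le> gotz a r z"
  unfolding gotz_def using member_le_sum[of 1 "{1..r}" "\<lambda>i. (z + a i - (i - 1)) choose a i"] by simp

lemma nonincr_flat:
  assumes "nonincr a r" "r = 0 \<or> a 1 = 0"
  shows "\<forall>i. 1 \<le> i \<longrightarrow> i \<le> r \<longrightarrow> a i = 0"
proof (intro allI impI)
  fix i assume i: "1 \<le> i" "i \<le> r"
  then have "a i \<le> a 1" using assms(1) unfolding nonincr_def by auto
  then show "a i = 0" using assms(2) i by auto
qed

lemma nonincr_positive_prefix:
  "nonincr a r \<Longrightarrow> \<exists>s\<le>r. \<forall>i. 1 \<le> i \<longrightarrow> i \<le> r \<longrightarrow> (0 < a i \<longleftrightarrow> i \<le> s)"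
proof (induction r)
  case (Suc r)
  have "nonincr a r" using Suc.prems unfolding nonincr_def by simp
  then obtain s where s: "s \<le> r" "\<forall>i. 1 \<le> i \<longrightarrow> i \<le> r \<longrightarrow> (0 < a i \<longleftrightarrow> i \<le> s)"
    using Suc.IH by blast
  show ?case
  proof (cases "0 < a (Suc r)")
    case True
    have "a (Suc r) \<le> a i" if "1 \<le> i" "i \<le> Suc r" for i
      using Suc.prems that unfolding nonincr_def by blast
    then show ?thesis using True by (intro exI[of _ "Suc r"]) fastforce
  next
    case False
    then show ?thesis using s by (intro exI[of _ s]) (auto simp: le_Suc_eq)
  qed
qed simp

lemma gotz_tail:
  assumes sr: "s \<le> r" and sp: "\<forall>i. 1 \<le> i \<longrightarrow> i \<le> r \<longrightarrow> (0 < a i \<longleftrightarrow> i \<le> s)"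
  shows "gotz a r z = gotz a s z + (r - s)"
proof -
  let ?f = "\<lambda>i. (z + a i - (i - 1)) choose a i"
  have "gotz a r z = sum ?f ({1..s} \<union> {Suc s..r})" unfolding gotz_def using sr
    by (intro sum.cong) auto
  also have "\<dots> = sum ?f {1..s} + sum ?f {Suc s..r}" by (rule sum.union_disjoint) auto
  also have "sum ?f {Suc s..r} = (\<Sum>i\<in>{Suc s..r}. 1)"
  proof (rule sum.cong)
    fix i assume "i \<in> {Suc s..r}"
    then have "1 \<le> i" "i \<le> r" "\<not> i \<le> s" by auto
    then have "a i = 0" using sp by blast
    then show "?f i = 1" by simp
  qed simp
  finally show ?thesis unfolding gotz_def by simp
qed

lemma gotz_difference:
  assumes sr: "s \<le> r" and sp: "\<forall>i. 1 \<le> i \<longrightarrow> i \<le> r \<longrightarrow> (0 < a i \<longleftrightarrow> i \<le> s)" and rz: "r \<le> z"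
  shows "gotz a r (Suc z) = gotz a r z + gotz (\<lambda>i. a i - 1) s (Suc z)"
proof -
  have "gotz a s (Suc z) = (\<Sum>i\<in>{1..s}. ((Suc z + (a i - 1) - (i - 1)) choose (a i - 1))
       + ((z + a i - (i - 1)) choose a i))"
    unfolding gotz_def
  proof (rule sum.cong)
    fix i assume i: "i \<in> {1..s}"
    then have ai: "a i = a i - 1 + 1" using sp sr by auto
    have "i - 1 \<le> Suc z" using i sr rz by auto
    from pascal_step[OF this, of "a i - 1"] ai
    show "(Suc z + a i - (i - 1)) choose a i = ((Suc z + (a i - 1) - (i - 1)) choose (a i - 1))
       + ((z + a i - (i - 1)) choose a i)" by simp
  qed simp
  also have "\<dots> = gotz (\<lambda>i. a i - 1) s (Suc z) + gotz a s z"
    unfolding gotz_def sum.distrib ..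
  finally show ?thesis using gotz_tail[OF sr sp, of z] gotz_tail[OF sr sp, of "Suc z"] by simp
qed

lemma gotz_differences_agree:
  assumes s: "s \<le> r" "\<forall>i. 1 \<le> i \<longrightarrow> i \<le> r \<longrightarrow> (0 < a i \<longleftrightarrow> i \<le> s)"
    and s': "s' \<le> r'" "\<forall>i. 1 \<le> i \<longrightarrow> i \<le> r' \<longrightarrow> (0 < a' i \<longleftrightarrow> i \<le> s')"
    and eq: "\<forall>z\<ge>N. gotz a r z = gotz a' r' z"
  shows "\<forall>z\<ge>Suc (N + r + r'). gotz (\<lambda>i. a i - 1) s z = gotz (\<lambda>i. a' i - 1) s' z"
proof (intro allI impI)
  fix z assume "Suc (N + r + r') \<le> z"
  then obtain y where y: "z = Suc y" "N + r + r' \<le> y" by (cases z) auto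
  then show "gotz (\<lambda>i. a i - 1) s z = gotz (\<lambda>i. a' i - 1) s' z"
    using gotz_difference[OF s(1) s(2), of y] gotz_difference[OF s'(1) s'(2), of y]
      eq[rule_format, of y] eq[rule_format, of "Suc y"] by simp
qed

text \<open>A sum with only zero exponents (the constant \<open>r\<close>) never agrees eventually with one having a
  positive exponent, since the latter grows at least linearly.\<close>
lemma gotz_flat_ne_growing:
  assumes fl: "nonincr a r" "r = 0 \<or> a 1 = 0" and nf: "1 \<le> r'" "1 \<le> a' 1"
  shows "\<not> (\<forall>z\<ge>N. gotz a r z = gotz a' r' z)"
proof
  assume e: "\<forall>z\<ge>N. gotz a r z = gotz a' r' z"
  let ?z = "N + r"
  have "gotz a r ?z = r" using gotz_flat[OF nonincr_flat[OF fl]] .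
  moreover have "?z + 1 \<le> (?z + a' 1) choose (a' 1)" using choose_lower_bound[OF nf(2)] .
  moreover have "(?z + a' 1) choose (a' 1) \<le> gotz a' r' ?z" using gotz_ge_first[OF nf(1)] .
  moreover have "gotz a r ?z = gotz a' r' ?z" using e by simp
  ultimately show False by linarith
qed

lemma gotz_unique:
  "nonincr a r \<Longrightarrow> nonincr a' r' \<Longrightarrow> \<forall>z\<ge>N. gotz a r z = gotz a' r' z
   \<Longrightarrow> r = r' \<and> (\<forall>i. 1 \<le> i \<longrightarrow> i \<le> r \<longrightarrow> a i = a' i)"
proof (induction "a 1 + a' 1" arbitrary: a r a' r' N rule: less_induct)
  case less
  note na = less.prems(1) and na' = less.prems(2) and eq = less.prems(3)
  consider "r = 0 \<or> a 1 = 0" "r' = 0 \<or> a' 1 = 0"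
    | "r = 0 \<or> a 1 = 0" "1 \<le> r'" "1 \<le> a' 1"
    | "1 \<le> r" "1 \<le> a 1" "r' = 0 \<or> a' 1 = 0"
    | "1 \<le> r" "1 \<le> a 1" "1 \<le> r'" "1 \<le> a' 1"
    by linarith
  then show ?case
  proof cases
    case 1
    then have "gotz a r N = r" "gotz a' r' N = r'"
      using gotz_flat[OF nonincr_flat[OF na]] gotz_flat[OF nonincr_flat[OF na']] by auto
    then show ?thesis using eq nonincr_flat[OF na 1(1)] nonincr_flat[OF na' 1(2)] by auto
  next
    case 2
    then show ?thesis using gotz_flat_ne_growing[OF na] eq by blast
  next
    case 3
    then show ?thesis using gotz_flat_ne_growing[OF na', of r a N] eq by simp
  next
    case 4
    obtain s where s: "s \<le> r" "\<forall>i. 1 \<le> i \<longrightarrow> i \<le> r \<longrightarrow> (0 < a i \<longleftrightarrow> i \<le> s)"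
      using nonincr_positive_prefix[OF na] by blast
    obtain s' where s': "s' \<le> r'" "\<forall>i. 1 \<le> i \<longrightarrow> i \<le> r' \<longrightarrow> (0 < a' i \<longleftrightarrow> i \<le> s')"
      using nonincr_positive_prefix[OF na'] by blast
    let ?b = "\<lambda>i. a i - 1" and ?b' = "\<lambda>i. a' i - 1"
    have eqb: "\<forall>z\<ge>Suc (N + r + r'). gotz ?b s z = gotz ?b' s' z"
      using gotz_differences_agree[OF s s' eq] .
    have nb: "nonincr ?b s" using na s unfolding nonincr_def by (auto intro: diff_le_mono)
    have nb': "nonincr ?b' s'" using na' s' unfolding nonincr_def by (auto intro: diff_le_mono)
    have "?b 1 + ?b' 1 < a 1 + a' 1" using 4 by auto
    from less.hyps[OF this nb nb' eqb]
    have ss: "s = s'" and bb: "\<forall>i. 1 \<le> i \<longrightarrow> i \<le> s \<longrightarrow> ?b i = ?b' i" by auto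
    have prefix: "a i = a' i" if "1 \<le> i" "i \<le> s" for i
    proof -
      have "0 < a i" "0 < a' i" using s s' ss that by auto
      then show ?thesis using bb that by auto
    qed
    have "gotz a s N = gotz a' s N" unfolding gotz_def using prefix by (intro sum.cong) auto
    then have rr: "r = r'"
      using gotz_tail[OF s(1) s(2), of N] gotz_tail[OF s'(1) s'(2), of N] ss s(1) s'(1) eq by simp
    have "a i = a' i" if "1 \<le> i" "i \<le> r" for i
    proof (cases "i \<le> s")
      case False
      then have "\<not> 0 < a i" "\<not> 0 < a' i" using s(2) s'(2) ss rr that by blast+
      then show ?thesis by simp
    qed (use prefix that in simp)
    with rr show ?thesis by blast
  qed
qed

text \<open>Two minimal generators that differ at most in the exponent of \<open>x\<^sub>1\<close> are comparable, hence equal.\<close>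
lemma min_gens_eq_off_x1:
  assumes g: "g \<in> min_gens J" and g': "g' \<in> min_gens J" and off: "\<And>i. i \<noteq> 1 \<Longrightarrow> g i = g' i"
  shows "g = g'"
proof (cases "g 1 \<le> g' 1")
  case True
  have "g \<le> g'" unfolding le_fun_def
  proof
    fix i show "g i \<le> g' i" using True off[of i] by (cases "i = 1") auto
  qed
  then show ?thesis using g g' unfolding min_gens_def by blast
next
  case False
  have "g' \<le> g" unfolding le_fun_def
  proof
    fix i show "g' i \<le> g i" using False off[of i] by (cases "i = 1") auto
  qed
  then show ?thesis using g g' unfolding min_gens_def by blast
qed

text \<open>In a saturated Borel ideal, if a proper divisor \<open>b \<in> J\<close> of an \<open>x\<^sub>0\<close>-free \<open>g\<close> has the same
  \<open>x\<^sub>1\<close>-exponent, then \<open>b\<close> misses some \<open>x\<^sub>j\<close>, \<open>j > 1\<close>, and a Borel move \<open>x\<^sub>1 \<rightarrow> x\<^sub>j\<close> shows \<open>g / x\<^sub>1 \<in> J\<close>.\<close>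
lemma proper_divisor_same_x1:
  assumes s: "sat_borel (Suc m) J" and g: "g \<in> mons (Suc m)" "g 0 = 0" "0 < g 1"
    and b: "b \<in> J" "b \<le> g" "b 1 = g 1" "b \<noteq> g"
  shows "g(1 := g 1 - 1) \<in> J"
proof -
  obtain j where "b j \<noteq> g j" using b(4) by (auto simp: fun_eq_iff)
  moreover have "b j \<le> g j" using b(2) unfolding le_fun_def by blast
  ultimately have j: "b j < g j" by simp
  have j1: "j \<noteq> 1" using j b(3) by auto
  have "j \<noteq> 0" using j g(2) by (cases "j = 0") auto
  with j1 have "1 < j" by simp
  have jn: "j \<le> Suc m"
  proof (rule ccontr)
    assume "\<not> j \<le> Suc m"
    then have "g j = 0" using g(1) unfolding mons_def by simp
    then show False using j by simp
  qed
  let ?h = "g(j := g j - 1)"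
  have "b \<le> ?h" using b(2) j unfolding le_fun_def by auto
  then have hJ: "?h \<in> J" using sat_borel_upward[OF s b(1)] mons_upd[OF g(1) jn] by simp
  have B: "borel (Suc m) J" using s unfolding sat_borel_def by simp
  have pos: "?h 1 > 0" using g(3) j1 by simp
  have moved: "?h(1 := ?h 1 - 1, j := ?h j + 1) \<in> J"
    using borel_move[OF B hJ \<open>1 < j\<close> jn pos] .
  have "?h(1 := ?h 1 - 1, j := ?h j + 1) = g(1 := g 1 - 1)"
    using j1 j by (auto simp: fun_eq_iff)
  with moved show ?thesis by (simp only:)
qed

text \<open>For a gap \<open>f\<close>, let \<open>l\<close> be the least exponent with \<open>f(1 := l) \<in> J\<close>.  Then \<open>f(1 := l)\<close> is a minimal
  generator: a proper divisor in \<open>J\<close> with smaller \<open>x\<^sub>1\<close>-exponent contradicts the minimality of \<open>l\<close>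
  directly, one with \<open>x\<^sub>1\<close>-exponent \<open>l\<close> via the previous lemma.\<close>
lemma gap_least_x1_lift:
  assumes s: "sat_borel (Suc m) J" and f: "f \<in> gaps (Suc m) J"
    and l: "l = (LEAST k. f(1 := k) \<in> J)"
  shows "f(1 := l) \<in> min_gens J" and "f 1 < l"
proof -
  have fI: "f \<in> x1_sat (Suc m) J" and fJ: "f \<notin> J" and f0: "f 0 = 0" using f unfolding gaps_def by auto
  have fm: "f \<in> mons (Suc m)" using fI unfolding x1_sat_def by simp
  have "\<exists>k. f(1 := k) \<in> J" using fI unfolding x1_sat_def by blast
  then have lJ: "f(1 := l) \<in> J" unfolding l by (rule LeastI_ex)
  have lmin: "f(1 := k) \<notin> J" if "k < l" for k using that unfolding l by (rule not_less_Least)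
  show lf: "f 1 < l"
  proof (rule ccontr)
    assume "\<not> f 1 < l"
    then have "f(1 := l) \<le> f" unfolding le_fun_def by auto
    then show False using sat_borel_upward[OF s lJ _ fm] fJ by blast
  qed
  show "f(1 := l) \<in> min_gens J"
    unfolding min_gens_def
  proof (intro CollectI conjI ballI impI lJ)
    fix b assume bJ: "b \<in> J" and bg: "b \<le> f(1 := l)"
    have "b 1 \<le> l" using bg unfolding le_fun_def by (metis fun_upd_same)
    show "b = f(1 := l)"
    proof (rule ccontr)
      assume ne: "b \<noteq> f(1 := l)"
      show False
      proof (cases "b 1 < l")
        case True
        have "b \<le> f(1 := b 1)" using bg unfolding le_fun_def by (auto split: if_splits)
        then have "f(1 := b 1) \<in> J" using sat_borel_upward[OF s bJ] mons_upd[OF fm] by simp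
        then show False using lmin[OF True] by simp
      next
        case False
        then have "b 1 = (f(1 := l)) 1" using \<open>b 1 \<le> l\<close> by simp
        then have "(f(1 := l))(1 := (f(1 := l)) 1 - 1) \<in> J"
          using proper_divisor_same_x1[OF s _ _ _ bJ bg _ ne] mons_upd[OF fm] f0 lf by simp
        moreover have "f(1 := l - 1) \<notin> J" using lf by (intro lmin) simp
        ultimately show False by simp
      qed
    qed
  qed
qed

lemma min_gen_divided_by_x1_gap:
  assumes s: "sat_borel (Suc m) J" and g: "g \<in> min_gens J" and j: "1 \<le> j" "j \<le> g 1"
  shows "g(1 := g 1 - j) \<in> gaps (Suc m) J"
proof -
  let ?v = "g(1 := g 1 - j)"
  have gJ: "g \<in> J" using g unfolding min_gens_def by simp
  have vm: "?v \<in> mons (Suc m)" using mons_upd[of g "Suc m" 1] gJ sat_borel_sub[OF s] by auto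
  have "?v(1 := g 1) = g" by simp
  then have "?v \<in> x1_sat (Suc m) J" unfolding x1_sat_def using vm gJ by (auto intro!: exI[of _ "g 1"])
  moreover have "?v \<notin> J"
  proof
    assume "?v \<in> J"
    moreover have "?v \<le> g" unfolding le_fun_def by auto
    ultimately have "?v = g" using g unfolding min_gens_def by blast
    then have "g 1 - j = g 1" by (metis fun_upd_same)
    then show False using j by simp
  qed
  moreover have "?v 0 = 0" using min_gen_x0[OF s g] by simp
  ultimately show ?thesis unfolding gaps_def by simp
qed

text \<open>\<open>(g, j) \<mapsto> g / x\<^sub>1\<^sup>j\<close> is a bijection from the pairs with \<open>g\<close> a minimal generator and
  \<open>1 \<le> j \<le> g\<^sub>1\<close> onto the gaps; hence the number of gaps is \<open>\<Sum>\<^sub>g g\<^sub>1\<close>.\<close>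
lemma card_gaps:
  assumes s: "sat_borel (Suc m) J" and fin: "finite (min_gens J)"
  shows "card (gaps (Suc m) J) = (\<Sum>g\<in>min_gens J. g 1)"
proof -
  let ?S = "Sigma (min_gens J) (\<lambda>g. {1..g 1})"
  let ?h = "\<lambda>(g, j). g(1 := g 1 - j)"
  have inj: "inj_on ?h ?S"
  proof (rule inj_onI)
    fix x y assume x: "x \<in> ?S" and y: "y \<in> ?S" and e: "?h x = ?h y"
    obtain g j where gj: "x = (g, j)" "g \<in> min_gens J" "1 \<le> j" "j \<le> g 1" using x by auto
    obtain g' j' where gj': "y = (g', j')" "g' \<in> min_gens J" "1 \<le> j'" "j' \<le> g' 1" using y by auto
    have e': "g(1 := g 1 - j) = g'(1 := g' 1 - j')" using e gj gj' by simp
    have "g i = g' i" if "i \<noteq> 1" for i using fun_cong[OF e', of i] that by simp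
    then have "g = g'" by (rule min_gens_eq_off_x1[OF gj(2) gj'(2)])
    moreover have "g 1 - j = g' 1 - j'" using fun_cong[OF e', of 1] by simp
    ultimately show "x = y" using gj gj' by simp
  qed
  have "?h ` ?S = gaps (Suc m) J"
  proof
    show "?h ` ?S \<subseteq> gaps (Suc m) J" using min_gen_divided_by_x1_gap[OF s] by auto
    show "gaps (Suc m) J \<subseteq> ?h ` ?S"
    proof
      fix f assume f: "f \<in> gaps (Suc m) J"
      define l where "l = (LEAST k. f(1 := k) \<in> J)"
      note lift = gap_least_x1_lift[OF s f l_def]
      have eq: "?h (f(1 := l), l - f 1) = f" using lift(2) by (auto simp: fun_eq_iff)
      have mem: "(f(1 := l), l - f 1) \<in> ?S" using lift by auto
      from image_eqI[of f ?h, OF sym[OF eq] mem] show "f \<in> ?h ` ?S" .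
    qed
  qed
  then have "card (gaps (Suc m) J) = card ?S" using card_image[OF inj] by simp
  also have "\<dots> = (\<Sum>g\<in>min_gens J. card {1..g 1})" using fin by (intro card_SigmaI) auto
  finally show ?thesis by simp
qed

lemma hilb_fun_gotzmann_eventually:
  assumes hp: "is_hilb_poly n J p" and gn: "gotzmann_number p r"
  shows "\<exists>a N. nonincr a r \<and> (\<forall>z\<ge>N. hilb_fun n J z = gotz a r z)"
proof -
  obtain a where na: "nonincr a r" and ea: "\<forall>\<^sub>F z in sequentially. poly p (real z) =
      (\<Sum>i=1..r. real ((z + a i - (i - 1)) choose (a i)))"
    using gn unfolding gotzmann_number_def nonincr_def by blast
  have "\<forall>\<^sub>F z in sequentially. hilb_fun n J z = gotz a r z"
    using ea hp unfolding is_hilb_poly_def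
  proof eventually_elim
    case (elim z)
    then have "real (hilb_fun n J z) = real (gotz a r z)" unfolding gotz_def by (simp add: of_nat_sum)
    then show ?case by (simp only: of_nat_eq_iff)
  qed
  with na show ?thesis unfolding eventually_sequentially by blast
qed

text \<open>Statement (1) of the proof outline: by uniqueness of Gotzmann representations, the \<open>r\<close>
  constructed by the induction is the Gotzmann number; so the gaps have degree \<open>< r\<close> and \<open>J\<close> is
  generated in degrees \<open>\<le> r\<close>.\<close>
lemma gaps_below_gotzmann_number:
  assumes s: "sat_borel (Suc m) J" and hp: "is_hilb_poly (Suc m) J p" and gn: "gotzmann_number p r"
  shows "\<forall>f\<in>gaps (Suc m) J. mdeg (Suc m) f < r" and "finite (min_gens J)"
proof -
  obtain b t where "gotz_bounded m (x0_section m (x1_sat (Suc m) J)) b t"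
    using gotz_bounded_exists[OF sat_borel_x0_section[OF s]] by blast
  then obtain a' r' where g: "gotz_bounded (Suc m) J a' r'"
    and gaps_deg: "\<forall>f\<in>gaps (Suc m) J. mdeg (Suc m) f < r'"
    using gotz_bounded_step[OF s] by blast
  obtain a N where na: "nonincr a r" and eq: "\<forall>z\<ge>N. hilb_fun (Suc m) J z = gotz a r z"
    using hilb_fun_gotzmann_eventually[OF hp gn] by blast
  have "gotz a r z = gotz a' r' z" if "N + r' \<le> z" for z
  proof -
    have "hilb_fun (Suc m) J z = gotz a' r' z" using g that unfolding gotz_bounded_def by simp
    then show ?thesis using eq that by simp
  qed
  then have "\<forall>z\<ge>N + r'. gotz a r z = gotz a' r' z" by blast
  then have "r = r'" using gotz_unique[OF na] g unfolding gotz_bounded_def by blast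
  then show "\<forall>f\<in>gaps (Suc m) J. mdeg (Suc m) f < r" using gaps_deg by simp
  show "finite (min_gens J)"
    using finite_min_gens[OF sat_borel_sub[OF s]] g unfolding gotz_bounded_def by blast
qed

theorem mainTheorem10:
  fixes n r :: nat and J :: "(nat \<Rightarrow> nat) set" and p :: "real poly"
  assumes "1 \<le> n"
    and "borel n J"
    and "sat n J = J"
    and "is_hilb_poly n J p"
    and "gotzmann_number p r"
  shows "is_hilb_poly n (sat01 n J)
           (p - [: real_of_int (int (dim_deg n (sat01 n J) r) - int (dim_deg n J r)) :])
         \<and> int (dim_deg n (sat01 n J) r) - int (dim_deg n J r) = int (\<Sum>a\<in>min_gens J. a 1)"
proof -
  obtain m where n: "n = Suc m" using assms(1) by (cases n) auto
  have s: "sat_borel (Suc m) J" using sat_borel_if_sat[OF assms(2,3)] n by simp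
  let ?F = "gaps (Suc m) J"
  have hp: "is_hilb_poly (Suc m) J p" using assms(4) n by simp
  note below = gaps_below_gotzmann_number[OF s hp assms(5)]
  have all_gaps: "{f \<in> ?F. mdeg (Suc m) f \<le> d} = ?F" if "r \<le> d" for d
    using below that by fastforce
  have I: "sat01 n J = x1_sat n J" using sat01_eq_x1_sat[OF s] n by simp
  have q: "int (dim_deg n (sat01 n J) r) - int (dim_deg n J r) = int (card ?F)"
    using dim_deg_via_gaps[OF s, of r] all_gaps[of r] I n by simp
  have "\<forall>\<^sub>F z in sequentially. real (hilb_fun n (sat01 n J) z) = poly p (real z) - real (card ?F)"
    using assms(4) eventually_ge_at_top[of r] unfolding is_hilb_poly_def
  proof eventually_elim
    case (elim z)
    then show ?case using hilb_fun_via_gaps[OF s, of z] all_gaps[of z] I n by simp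
  qed
  then have "is_hilb_poly n (sat01 n J) (p - [: real (card ?F) :])"
    unfolding is_hilb_poly_def by simp
  then show ?thesis using q card_gaps[OF s below(2)] by simp
qed
end
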